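(* Let $\Bbbk$ be a field of characteristic zero. The algebra $A=\Bbbk[x_1,x_2,x_3,x_4,x_5]/(x_1^4,x_2^4,x_3^4,x_4^4,x_5^4,x_1 x_2 x_3 x_4)$ fails the WLP by injectivity in degree $6$.
   Context: $\mathrm{HF}(A,k)=\dim_\Bbbk A_k$. $A$ fails the WLP by injectivity in degree $i$ if $\mathrm{HF}(A,i)\le\mathrm{HF}(A,i+1)$ and $\times(x_1+\cdots+x_5): A_i\to A_{i+1}$ is not injective. *)

theory Defs
  imports Complex_Main "HOL-Library.Poly_Mapping"
begin

text \<open>Variable x_(i+1) of the paper is index i.\<close>

type_synonym 'k mpoly = "(nat \<Rightarrow>\<^sub>0 nat) \<Rightarrow>\<^sub>0 'k"

definition Var :: "nat \<Rightarrow> 'k::comm_ring_1 mpoly" where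
  "Var i = Poly_Mapping.single (Poly_Mapping.single i 1) 1"

definition pscale :: "'k::comm_ring_1 \<Rightarrow> 'k mpoly \<Rightarrow> 'k mpoly" where
  "pscale c p = Poly_Mapping.map (\<lambda>a. c * a) p"

definition mdeg :: "(nat \<Rightarrow>\<^sub>0 nat) \<Rightarrow> nat" where
  "mdeg m = (\<Sum>i\<in>Poly_Mapping.keys m. Poly_Mapping.lookup m i)"

definition polys :: "nat \<Rightarrow> 'k::comm_ring_1 mpoly set" where
  "polys n = {p. \<forall>m\<in>Poly_Mapping.keys p. Poly_Mapping.keys m \<subseteq> {..<n}}"

definition hom_polys :: "nat \<Rightarrow> nat \<Rightarrow> 'k::comm_ring_1 mpoly set" where
  "hom_polys n d = {p \<in> polys n. \<forall>m\<in>Poly_Mapping.keys p. mdeg m = d}"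

definition gen_ideal :: "nat \<Rightarrow> (nat \<Rightarrow> 'k::comm_ring_1 mpoly) \<Rightarrow> nat \<Rightarrow> 'k mpoly set" where
  "gen_ideal n g r = {(\<Sum>j<r. h j * g j) | h. \<forall>j<r. h j \<in> polys n}"

text \<open>Hilbert function of A = k[x_1,...,x_n]/I in degree d for a homogeneous ideal I:
  dim_k A_d = dim_k (R_d / I_d) = dim_k R_d - dim_k I_d.\<close>
definition HF :: "nat \<Rightarrow> 'k::field mpoly set \<Rightarrow> nat \<Rightarrow> nat" where
  "HF n I d = vector_space.dim pscale (hom_polys n d :: 'k mpoly set)
             - vector_space.dim pscale (I \<inter> hom_polys n d)"

text \<open>Multiplication by the linear form L : A_d \<rightarrow> A_(d+1) is injective iff
  every f in R_d with L f in I already lies in I.\<close>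
definition mult_injective :: "nat \<Rightarrow> 'k::field mpoly set \<Rightarrow> 'k mpoly \<Rightarrow> nat \<Rightarrow> bool" where
  "mult_injective n I L d = (\<forall>f\<in>hom_polys n d. L * f \<in> I \<longrightarrow> f \<in> I)"

definition fails_WLP_inj :: "nat \<Rightarrow> 'k::field mpoly set \<Rightarrow> nat \<Rightarrow> bool" where
  "fails_WLP_inj n I i =
     (HF n I i \<le> HF n I (Suc i) \<and> \<not> mult_injective n I (\<Sum>j<n. Var j) i)"

definition gens5p9 :: "nat \<Rightarrow> 'k::comm_ring_1 mpoly" where
  "gens5p9 j = (if j < 5 then Var j ^ 4 else Var 0 * Var 1 * Var 2 * Var 3)"

end

theory Submission
  imports Defs
begin

text \<open>
  The ideal is generated by monomials, so a polynomial lies in it iff none of its monomials is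
  standard, i.e. has all exponents at most 3 and misses one of x_1, ..., x_4; the standard
  monomials of degree d form a basis of A_d. Counting them gives HF(A,6) = 120 <= 124 = HF(A,7).

  For the kernel, let m_t be the sum of all monomials whose nonzero exponents, sorted
  decreasingly, are t, and
  f = 6 m_(3,3) - 3 m_(3,2,1) + 8 m_(3,1,1,1) + 6 m_(2,2,2) - 2 m_(2,2,1,1).
  The monomial x_1^3 x_2^3 of f is standard, so f is not in the ideal. The coefficient of a
  standard monomial u of degree 7 in (x_1 + ... + x_5) f is the sum of the coefficients of f at
  the monomials u / x_j. Such a u has shape (3,3,1), (3,2,2), (3,2,1,1) or (2,2,2,1), and the
  sums are 6 - 2*3, 6 - 2*3, -2 + 8 - 2*3 and 6 - 3*2, all zero. Hence (x_1 + ... + x_5) f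
  lies in the ideal.
\<close>

section \<open>Polynomials as a vector space over the coefficients\<close>

lemma pscale_eq_single_mult: "pscale c p = Poly_Mapping.single 0 c * p"
  unfolding pscale_def by (rule mult_map_scale_conv_mult)

lemma lookup_pscale [simp]: "Poly_Mapping.lookup (pscale c p) m = c * Poly_Mapping.lookup p m"
  unfolding pscale_def by (simp add: Poly_Mapping.map.rep_eq when_def)

lemma pscale_single_one: "pscale c (Poly_Mapping.single m 1) = Poly_Mapping.single m c"
  by (rule poly_mapping_eqI) (simp add: lookup_single when_def)

interpretation mpoly: vector_space "pscale :: 'k::field \<Rightarrow> 'k mpoly \<Rightarrow> 'k mpoly"
  by unfold_locales (simp_all add: pscale_eq_single_mult algebra_simps single_add mult_single)

lemma sum_single_lookup:
  "(\<Sum>m\<in>Poly_Mapping.keys p. Poly_Mapping.single m (Poly_Mapping.lookup p m)) = p"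
  by (rule poly_mapping_eqI) (simp add: lookup_sum lookup_single when_def in_keys_iff)

lemma lookup_sum_single:
  "finite M \<Longrightarrow>
   Poly_Mapping.lookup (\<Sum>m'\<in>M. Poly_Mapping.single m' (c m')) m = (if m \<in> M then c m else 0)"
  by (simp add: lookup_sum lookup_single when_def)

lemma single_one_eq_iff [simp]:
  "Poly_Mapping.single m (1::'a::zero_neq_one) = Poly_Mapping.single m' 1 \<longleftrightarrow> m = m'"
  by (metis lookup_single_eq lookup_single_not_eq one_neq_zero)

lemma independent_monomials:
  "mpoly.independent ((\<lambda>m. Poly_Mapping.single m (1::'k::field)) ` M)"
  unfolding mpoly.independent_explicit_finite_subsets
proof (intro allI impI ballI)
  fix S u v
  assume S: "S \<subseteq> (\<lambda>m. Poly_Mapping.single m (1::'k)) ` M" "finite S"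
    and zero: "(\<Sum>v\<in>S. pscale (u v) v) = 0" and v: "v \<in> S"
  obtain m where m: "v = Poly_Mapping.single m 1" using S v by blast
  have "0 = Poly_Mapping.lookup (\<Sum>w\<in>S. pscale (u w) w) m" using zero by simp
  also have "\<dots> = (\<Sum>w\<in>S. if w = v then u w else 0)"
    unfolding lookup_sum
  proof (rule sum.cong)
    fix w assume "w \<in> S"
    then obtain m' where "w = Poly_Mapping.single m' 1" using S by blast
    then show "Poly_Mapping.lookup (pscale (u w) w) m = (if w = v then u w else 0)"
      using m by (auto simp: lookup_single when_def)
  qed simp
  also have "\<dots> = u v" using S(2) v by simp
  finally show "u v = 0" by simp
qed

lemma dim_supported_polys:
  assumes "finite M"
  shows "mpoly.dim {p :: 'k::field mpoly. Poly_Mapping.keys p \<subseteq> M} = card M"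
proof -
  let ?B = "(\<lambda>m. Poly_Mapping.single m (1::'k)) ` M"
  have "inj_on (\<lambda>m. Poly_Mapping.single m (1::'k)) M"
    by (rule inj_onI) simp
  then have "card ?B = card M" by (rule card_image)
  moreover have "{p. Poly_Mapping.keys p \<subseteq> M} \<subseteq> mpoly.span ?B"
  proof
    fix p :: "'k mpoly" assume "p \<in> {p. Poly_Mapping.keys p \<subseteq> M}"
    then have "(\<Sum>m\<in>Poly_Mapping.keys p. pscale (Poly_Mapping.lookup p m) (Poly_Mapping.single m 1))
        \<in> mpoly.span ?B"
      by (intro mpoly.span_sum mpoly.span_scale mpoly.span_base) auto
    then show "p \<in> mpoly.span ?B" by (simp add: pscale_single_one sum_single_lookup)
  qed
  moreover have "?B \<subseteq> {p. Poly_Mapping.keys p \<subseteq> M}" by auto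
  ultimately show ?thesis using mpoly.basis_card_eq_dim[OF _ _ independent_monomials] by metis
qed

lemma polys_add: "p \<in> polys n \<Longrightarrow> q \<in> polys n \<Longrightarrow> p + q \<in> polys n"
  unfolding polys_def using keys_add[of p q] by blast

lemma zero_in_polys [simp]: "0 \<in> polys n"
  by (simp add: polys_def)

lemma single_in_polys: "Poly_Mapping.keys m \<subseteq> {..<n} \<Longrightarrow> Poly_Mapping.single m c \<in> polys n"
  by (simp add: polys_def)

lemma polys_sum: "(\<And>i. i \<in> A \<Longrightarrow> f i \<in> polys n) \<Longrightarrow> sum f A \<in> polys n"
  by (induction A rule: infinite_finite_induct) (auto intro: polys_add)

lemma keys_add_nat:
  "Poly_Mapping.keys (a + b) = Poly_Mapping.keys a \<union> Poly_Mapping.keys (b :: 'a \<Rightarrow>\<^sub>0 nat)"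
  by (auto simp: in_keys_iff lookup_add)

lemma polys_mult: "p \<in> polys n \<Longrightarrow> q \<in> polys n \<Longrightarrow> p * q \<in> polys n"
  unfolding polys_def using keys_mult[of p q] by (fastforce simp: keys_add_nat)

lemma mdeg_eq_sum:
  "finite S \<Longrightarrow> Poly_Mapping.keys m \<subseteq> S \<Longrightarrow> mdeg m = (\<Sum>i\<in>S. Poly_Mapping.lookup m i)"
  unfolding mdeg_def by (rule sum.mono_neutral_left) (auto simp: in_keys_iff)

lemma mdeg_add: "mdeg (a + b) = mdeg a + mdeg b"
proof -
  let ?S = "Poly_Mapping.keys a \<union> Poly_Mapping.keys b"
  have "mdeg (a + b) = (\<Sum>i\<in>?S. Poly_Mapping.lookup (a + b) i)"
    by (rule mdeg_eq_sum) (simp_all add: keys_add_nat)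
  also have "\<dots> = (\<Sum>i\<in>?S. Poly_Mapping.lookup a i) + (\<Sum>i\<in>?S. Poly_Mapping.lookup b i)"
    by (simp add: lookup_add sum.distrib)
  also have "\<dots> = mdeg a + mdeg b"
    by (simp add: mdeg_eq_sum[symmetric])
  finally show ?thesis .
qed

lemma mdeg_single [simp]: "mdeg (Poly_Mapping.single i k) = k"
  by (simp add: mdeg_def)

lemma zero_in_hom_polys [simp]: "0 \<in> hom_polys n d"
  by (simp add: hom_polys_def)

lemma hom_polys_add: "p \<in> hom_polys n d \<Longrightarrow> q \<in> hom_polys n d \<Longrightarrow> p + q \<in> hom_polys n d"
  unfolding hom_polys_def using keys_add[of p q] by (blast intro: polys_add)

lemma hom_polys_sum: "(\<And>i. i \<in> A \<Longrightarrow> f i \<in> hom_polys n d) \<Longrightarrow> sum f A \<in> hom_polys n d"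
  by (induction A rule: infinite_finite_induct) (auto intro: hom_polys_add)

lemma hom_polys_mult:
  "p \<in> hom_polys n d \<Longrightarrow> q \<in> hom_polys n e \<Longrightarrow> p * q \<in> hom_polys n (d + e)"
  unfolding hom_polys_def using keys_mult[of p q] by (fastforce simp: mdeg_add intro: polys_mult)

lemma Var_in_hom_polys: "i < n \<Longrightarrow> Var i \<in> hom_polys n 1"
  by (simp add: Var_def hom_polys_def polys_def)

lemma Var_power: "Var i ^ k = Poly_Mapping.single (Poly_Mapping.single i k) 1"
proof (induction k)
  case (Suc k)
  then show ?case by (simp add: Var_def mult_single single_add[symmetric])
qed simp

lemma lookup_Var_mult:
  "Poly_Mapping.lookup (Var j * p) m =
   (if Poly_Mapping.lookup m j = 0 then 0 else Poly_Mapping.lookup p (m - Poly_Mapping.single j 1))"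
proof -
  have "Var j * p =
        (\<Sum>a\<in>Poly_Mapping.keys p.
           Poly_Mapping.single (Poly_Mapping.single j 1 + a) (Poly_Mapping.lookup p a))"
    by (subst (1) sum_single_lookup[symmetric]) (simp add: Var_def sum_distrib_left mult_single)
  moreover have "Poly_Mapping.single j 1 + a = m \<longleftrightarrow>
      Poly_Mapping.lookup m j \<noteq> 0 \<and> a = m - Poly_Mapping.single j 1" for a
  proof
    assume "Poly_Mapping.single j 1 + a = m"
    then show "Poly_Mapping.lookup m j \<noteq> 0 \<and> a = m - Poly_Mapping.single j 1"
      by (auto intro!: poly_mapping_eqI simp: lookup_add lookup_minus)
  next
    assume "Poly_Mapping.lookup m j \<noteq> 0 \<and> a = m - Poly_Mapping.single j 1"
    then show "Poly_Mapping.single j 1 + a = m"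
      by (auto intro!: poly_mapping_eqI simp: lookup_add lookup_minus lookup_single when_def)
  qed
  ultimately show ?thesis
    by (auto simp: lookup_sum lookup_single when_def in_keys_iff)
qed

lemma lookup_sum_Var_mult:
  "Poly_Mapping.lookup ((\<Sum>j<n. Var j) * p) m =
   (\<Sum>j<n. if Poly_Mapping.lookup m j = 0 then 0
           else Poly_Mapping.lookup p (m - Poly_Mapping.single j 1))"
  by (simp add: sum_distrib_right lookup_sum lookup_Var_mult)

section \<open>Monomials as exponent vectors\<close>

definition monomials :: "nat \<Rightarrow> nat \<Rightarrow> (nat \<Rightarrow>\<^sub>0 nat) set" where
  "monomials n d = {m. Poly_Mapping.keys m \<subseteq> {..<n} \<and> mdeg m = d}"

lemma hom_polys_eq: "hom_polys n d = {p. Poly_Mapping.keys p \<subseteq> monomials n d}"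
  by (auto simp: hom_polys_def polys_def monomials_def)

definition exps :: "nat \<Rightarrow> (nat \<Rightarrow>\<^sub>0 nat) \<Rightarrow> nat list" where
  "exps n m = map (Poly_Mapping.lookup m) [0..<n]"

definition monom_of_list :: "nat list \<Rightarrow> (nat \<Rightarrow>\<^sub>0 nat)" where
  "monom_of_list xs = (\<Sum>i<length xs. Poly_Mapping.single i (xs ! i))"

lemma lookup_monom_of_list:
  "Poly_Mapping.lookup (monom_of_list xs) i = (if i < length xs then xs ! i else 0)"
  by (simp add: monom_of_list_def lookup_sum lookup_single when_def)

lemma length_exps [simp]: "length (exps n m) = n"
  by (simp add: exps_def)

lemma nth_exps [simp]: "i < n \<Longrightarrow> exps n m ! i = Poly_Mapping.lookup m i"
  by (simp add: exps_def)

lemma monom_of_list_exps: "Poly_Mapping.keys m \<subseteq> {..<n} \<Longrightarrow> monom_of_list (exps n m) = m"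
  by (rule poly_mapping_eqI) (auto simp: lookup_monom_of_list in_keys_iff)

lemma exps_monom_of_list: "exps (length xs) (monom_of_list xs) = xs"
  by (simp add: list_eq_iff_nth_eq lookup_monom_of_list)

lemma keys_monom_of_list: "Poly_Mapping.keys (monom_of_list xs) \<subseteq> {..<length xs}"
  by (auto simp: in_keys_iff lookup_monom_of_list split: if_splits)

lemma mdeg_eq_sum_list_exps: "Poly_Mapping.keys m \<subseteq> {..<n} \<Longrightarrow> mdeg m = sum_list (exps n m)"
  by (simp add: mdeg_eq_sum exps_def sum_list_sum_nth atLeast0LessThan)

lemma bij_betw_exps:
  "bij_betw (exps n) {m \<in> monomials n d. P (exps n m)} {xs. length xs = n \<and> sum_list xs = d \<and> P xs}"
proof (rule bij_betw_byWitness[where f' = monom_of_list])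
  show "\<forall>m\<in>{m \<in> monomials n d. P (exps n m)}. monom_of_list (exps n m) = m"
    by (simp add: monomials_def monom_of_list_exps)
  show "\<forall>xs\<in>{xs. length xs = n \<and> sum_list xs = d \<and> P xs}. exps n (monom_of_list xs) = xs"
    using exps_monom_of_list by blast
  show "exps n ` {m \<in> monomials n d. P (exps n m)} \<subseteq> {xs. length xs = n \<and> sum_list xs = d \<and> P xs}"
    by (auto simp: monomials_def mdeg_eq_sum_list_exps)
  show "monom_of_list ` {xs. length xs = n \<and> sum_list xs = d \<and> P xs} \<subseteq> {m \<in> monomials n d. P (exps n m)}"
    using keys_monom_of_list exps_monom_of_list
    by (fastforce simp: monomials_def mdeg_eq_sum_list_exps)
qed

lemma finite_monomials: "finite (monomials n d)"
proof -
  have "{xs. length xs = n \<and> sum_list xs = d} \<subseteq> set (List.n_lists n [0..<Suc d])"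
    by (auto simp: set_n_lists dest: member_le_sum_list)
  then have "finite {xs. length xs = n \<and> sum_list xs = d}"
    using finite_subset by blast
  then show ?thesis
    using bij_betw_finite[OF bij_betw_exps[where P = "\<lambda>_. True"]] by simp
qed

lemma exps_minus_single:
  "j < n \<Longrightarrow> exps n (m - Poly_Mapping.single j 1) = (exps n m)[j := exps n m ! j - 1]"
  by (simp add: list_eq_iff_nth_eq nth_list_update lookup_minus lookup_single when_def)

lemma minus_single_in_monomials:
  assumes "m \<in> monomials n (Suc d)" and "Poly_Mapping.lookup m j \<noteq> 0"
  shows "m - Poly_Mapping.single j 1 \<in> monomials n d"
proof -
  have m: "m = Poly_Mapping.single j 1 + (m - Poly_Mapping.single j 1)"
    using assms(2) by (intro poly_mapping_eqI) (auto simp: lookup_add lookup_minus lookup_single when_def)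
  then have "Poly_Mapping.keys (m - Poly_Mapping.single j 1) \<subseteq> Poly_Mapping.keys m"
    by (metis Un_upper2 keys_add_nat)
  moreover have "mdeg m = 1 + mdeg (m - Poly_Mapping.single j 1)"
    by (subst m) (simp add: mdeg_add)
  ultimately show ?thesis using assms(1) by (auto simp: monomials_def)
qed

fun bounded_compositions :: "nat \<Rightarrow> nat \<Rightarrow> nat \<Rightarrow> nat list list" where
  "bounded_compositions b 0 d = (if d = 0 then [[]] else [])"
| "bounded_compositions b (Suc k) d =
     concat (map (\<lambda>a. map (Cons a) (bounded_compositions b k (d - a))) [0..<Suc (min b d)])"

lemma set_bounded_compositions:
  "set (bounded_compositions b k d) = {xs. length xs = k \<and> sum_list xs = d \<and> (\<forall>x\<in>set xs. x \<le> b)}"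
proof (induction k arbitrary: d)
  case (Suc k)
  have "set (bounded_compositions b (Suc k) d) =
        (\<Union>a\<in>{..min b d}. Cons a ` set (bounded_compositions b k (d - a)))"
    by (simp only: bounded_compositions.simps set_concat set_map set_upt image_image
        atLeast0LessThan lessThan_Suc_atMost)
  also have "\<dots> = {xs. length xs = Suc k \<and> sum_list xs = d \<and> (\<forall>x\<in>set xs. x \<le> b)}"
    (is "?U = ?S")
  proof
    show "?U \<subseteq> ?S"
    proof
      fix xs assume "xs \<in> ?U"
      then obtain a ys where "xs = a # ys" "a \<le> min b d"
        "ys \<in> set (bounded_compositions b k (d - a))"
        by blast
      then show "xs \<in> ?S" by (auto simp: Suc.IH)
    qed
    show "?S \<subseteq> ?U"
    proof
      fix xs assume xs: "xs \<in> ?S"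
      then obtain a ys where "xs = a # ys" by (cases xs) auto
      with xs have "a \<in> {..min b d}" "ys \<in> set (bounded_compositions b k (d - a))"
        by (auto simp: Suc.IH)
      with \<open>xs = a # ys\<close> show "xs \<in> ?U" by blast
    qed
  qed
  finally show ?case .
qed auto

lemma distinct_concat_map_Cons:
  "distinct xs \<Longrightarrow> (\<And>a. distinct (f a)) \<Longrightarrow> distinct (concat (map (\<lambda>a. map (Cons a) (f a)) xs))"
  by (induction xs) (auto simp: distinct_map)

lemma distinct_bounded_compositions: "distinct (bounded_compositions b k d)"
  by (induction k arbitrary: d) (simp_all add: distinct_concat_map_Cons del: upt_Suc)

lemma exists_add_iff_lookup_le:
  "(\<exists>q. m = a + q) \<longleftrightarrow> (\<forall>i. Poly_Mapping.lookup a i \<le> Poly_Mapping.lookup (m :: 'a \<Rightarrow>\<^sub>0 nat) i)"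
proof
  assume "\<forall>i. Poly_Mapping.lookup a i \<le> Poly_Mapping.lookup m i"
  then have "m = a + (m - a)"
    by (intro poly_mapping_eqI) (simp add: lookup_add lookup_minus)
  then show "\<exists>q. m = a + q" ..
qed (auto simp: lookup_add)

section \<open>Monomial ideals\<close>

lemma gen_idealI: "(\<And>j. j < r \<Longrightarrow> h j \<in> polys n) \<Longrightarrow> (\<Sum>j<r. h j * g j) \<in> gen_ideal n g r"
  by (auto simp: gen_ideal_def)

lemma gen_ideal_add:
  "p \<in> gen_ideal n g r \<Longrightarrow> q \<in> gen_ideal n g r \<Longrightarrow> p + q \<in> gen_ideal n g r"
proof -
  assume "p \<in> gen_ideal n g r" "q \<in> gen_ideal n g r"
  then obtain h h' where p: "p = (\<Sum>j<r. h j * g j)" and h: "\<forall>j<r. h j \<in> polys n"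
    and q: "q = (\<Sum>j<r. h' j * g j)" and h': "\<forall>j<r. h' j \<in> polys n"
    unfolding gen_ideal_def by blast
  have "p + q = (\<Sum>j<r. (h j + h' j) * g j)"
    by (simp add: p q sum.distrib distrib_right)
  also have "\<dots> \<in> gen_ideal n g r"
    using h h' by (intro gen_idealI polys_add) auto
  finally show ?thesis .
qed

lemma zero_in_gen_ideal: "0 \<in> gen_ideal n g r"
  unfolding gen_ideal_def by (rule CollectI, rule exI[of _ "\<lambda>_. 0"]) simp

lemma gen_ideal_sum:
  "(\<And>i. i \<in> A \<Longrightarrow> f i \<in> gen_ideal n g r) \<Longrightarrow> sum f A \<in> gen_ideal n g r"
  by (induction A rule: infinite_finite_induct) (auto intro: zero_in_gen_ideal gen_ideal_add)

lemma mult_in_gen_ideal: "j < r \<Longrightarrow> h \<in> polys n \<Longrightarrow> h * g j \<in> gen_ideal n g r"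
proof -
  assume "j < r" "h \<in> polys n"
  then have "h * g j = (\<Sum>j'<r. (if j' = j then h else 0) * g j')"
    "\<forall>j'<r. (if j' = j then h else 0) \<in> polys n"
    by (simp_all add: if_distrib[of "\<lambda>x. x * _"] cong: if_cong)
  then show ?thesis using gen_idealI[of r "\<lambda>j'. if j' = j then h else 0"] by simp
qed

lemma gen_ideal_monomial:
  assumes "\<And>j. j < r \<Longrightarrow> Poly_Mapping.keys (G j) \<subseteq> {..<n}"
  shows "gen_ideal n (\<lambda>j. Poly_Mapping.single (G j) (1::'k::comm_ring_1)) r =
         {p \<in> polys n. \<forall>m\<in>Poly_Mapping.keys p. \<exists>j<r. \<exists>q. m = G j + q}"
    (is "?I = ?M")
proof (intro set_eqI iffI)
  fix p :: "'k mpoly"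
  assume "p \<in> ?I"
  then obtain h where p: "p = (\<Sum>j<r. h j * Poly_Mapping.single (G j) 1)"
    and h: "\<forall>j<r. h j \<in> polys n"
    unfolding gen_ideal_def by blast
  have "p \<in> polys n"
    unfolding p by (intro polys_sum polys_mult single_in_polys) (simp_all add: h assms)
  moreover have "\<exists>j<r. \<exists>q. m = G j + q" if m: "m \<in> Poly_Mapping.keys p" for m
  proof -
    obtain j where j: "j < r" and "m \<in> Poly_Mapping.keys (h j * Poly_Mapping.single (G j) 1)"
      using m keys_sum[of "\<lambda>j. h j * Poly_Mapping.single (G j) 1" "{..<r}"] unfolding p
      by blast
    then obtain q where "m = q + G j"
      using keys_mult[of "h j" "Poly_Mapping.single (G j) 1"] by auto
    then show ?thesis using j by (metis add.commute)
  qed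
  ultimately show "p \<in> ?M" by blast
next
  fix p :: "'k mpoly"
  assume p: "p \<in> ?M"
  have "Poly_Mapping.single m c \<in> ?I" if "m \<in> Poly_Mapping.keys p" for m c
  proof -
    from p that have "\<exists>j<r. \<exists>q. m = G j + q" by simp
    then obtain j q where j: "j < r" and m: "m = G j + q" by blast
    have "Poly_Mapping.keys m \<subseteq> {..<n}" using p that by (simp add: polys_def)
    then have "Poly_Mapping.keys q \<subseteq> {..<n}" by (simp add: m keys_add_nat)
    then have "Poly_Mapping.single q c * Poly_Mapping.single (G j) 1 \<in> ?I"
      using j by (intro mult_in_gen_ideal single_in_polys)
    then show ?thesis by (simp add: mult_single m add.commute)
  qed
  then have "(\<Sum>m\<in>Poly_Mapping.keys p. Poly_Mapping.single m (Poly_Mapping.lookup p m)) \<in> ?I"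
    by (intro gen_ideal_sum)
  then show "p \<in> ?I" by (simp only: sum_single_lookup)
qed

lemma HF_monomial_ideal:
  assumes "\<And>j. j < r \<Longrightarrow> Poly_Mapping.keys (G j) \<subseteq> {..<n}"
  shows "HF n (gen_ideal n (\<lambda>j. Poly_Mapping.single (G j) (1::'k::field)) r) d =
         card {m \<in> monomials n d. \<not> (\<exists>j<r. \<exists>q. m = G j + q)}"
proof -
  let ?D = "{m \<in> monomials n d. \<exists>j<r. \<exists>q. m = G j + q}"
  have "gen_ideal n (\<lambda>j. Poly_Mapping.single (G j) (1::'k)) r \<inter> hom_polys n d =
        {p. Poly_Mapping.keys p \<subseteq> ?D}"
    unfolding hom_polys_eq
    by (subst gen_ideal_monomial[OF assms]) (auto simp: polys_def monomials_def subset_iff)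
  then have "HF n (gen_ideal n (\<lambda>j. Poly_Mapping.single (G j) (1::'k)) r) d =
             card (monomials n d) - card ?D"
    by (simp add: HF_def hom_polys_eq dim_supported_polys finite_monomials)
  also have "\<dots> = card (monomials n d - ?D)"
    by (rule card_Diff_subset[symmetric]) (auto intro: finite_subset[OF _ finite_monomials])
  also have "monomials n d - ?D = {m \<in> monomials n d. \<not> (\<exists>j<r. \<exists>q. m = G j + q)}"
    by blast
  finally show ?thesis .
qed

definition gens5p9_monomial :: "nat \<Rightarrow> nat \<Rightarrow>\<^sub>0 nat" where
  "gens5p9_monomial j =
     (if j < 5 then Poly_Mapping.single j 4
      else Poly_Mapping.single 0 1 + Poly_Mapping.single 1 1 + Poly_Mapping.single 2 1
           + Poly_Mapping.single 3 1)"

lemma gens5p9_eq: "gens5p9 = (\<lambda>j. Poly_Mapping.single (gens5p9_monomial j) 1)"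
  by (simp add: fun_eq_iff gens5p9_def gens5p9_monomial_def Var_power) (simp add: Var_def mult_single)

lemma keys_gens5p9_monomial: "Poly_Mapping.keys (gens5p9_monomial j) \<subseteq> {..<5}"
  by (auto simp: gens5p9_monomial_def keys_add_nat)

definition standard_exps :: "nat list \<Rightarrow> bool" where
  "standard_exps xs \<longleftrightarrow> (\<forall>x\<in>set xs. x \<le> 3) \<and> 0 \<in> set (take 4 xs)"

lemma standard_exps_iff:
  "standard_exps (exps 5 m) \<longleftrightarrow>
   (\<forall>i<5. Poly_Mapping.lookup m i \<le> 3) \<and> (\<exists>i<4. Poly_Mapping.lookup m i = 0)"
proof -
  have "take 4 (exps 5 m) = exps 4 m" by (simp add: exps_def take_map)
  then show ?thesis by (auto simp: standard_exps_def exps_def)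
qed

lemma divisible_by_gens5p9_iff:
  "(\<exists>j<6. \<exists>q. m = gens5p9_monomial j + q) \<longleftrightarrow> \<not> standard_exps (exps 5 m)"
proof -
  have gen: "(\<exists>q. m = gens5p9_monomial j + q) \<longleftrightarrow>
        (if j < 5 then 4 \<le> Poly_Mapping.lookup m j else \<forall>i<4. 1 \<le> Poly_Mapping.lookup m i)" for j
    by (auto simp: exists_add_iff_lookup_le gens5p9_monomial_def lookup_add lookup_single when_def
        numeral_eq_Suc less_Suc_eq)
  have div: "(\<exists>j<6. \<exists>q. m = gens5p9_monomial j + q) \<longleftrightarrow>
        (\<forall>i<4. 1 \<le> Poly_Mapping.lookup m i) \<or> (\<exists>j<5. 4 \<le> Poly_Mapping.lookup m j)"
    unfolding gen Ex_less_Suc[of 5, simplified] by (auto cong: conj_cong)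
  show ?thesis unfolding div standard_exps_iff by auto
qed

lemma mem_gen_ideal_gens5p9_iff:
  "p \<in> gen_ideal 5 gens5p9 6 \<longleftrightarrow>
   p \<in> polys 5 \<and> (\<forall>m\<in>Poly_Mapping.keys p. \<not> standard_exps (exps 5 m))"
  by (simp add: gens5p9_eq gen_ideal_monomial[OF keys_gens5p9_monomial] divisible_by_gens5p9_iff)

lemma HF_gens5p9:
  "HF 5 (gen_ideal 5 (gens5p9 :: nat \<Rightarrow> 'k::field mpoly) 6) d =
   length (filter (\<lambda>xs. 0 \<in> set (take 4 xs)) (bounded_compositions 3 5 d))"
proof -
  have "HF 5 (gen_ideal 5 (gens5p9 :: nat \<Rightarrow> 'k mpoly) 6) d =
        card {m \<in> monomials 5 d. \<not> (\<exists>j<6. \<exists>q. m = gens5p9_monomial j + q)}"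
    unfolding gens5p9_eq by (rule HF_monomial_ideal[OF keys_gens5p9_monomial])
  also have "\<dots> = card {xs. length xs = 5 \<and> sum_list xs = d \<and> standard_exps xs}"
    unfolding divisible_by_gens5p9_iff not_not by (rule bij_betw_same_card[OF bij_betw_exps])
  also have "{xs. length xs = 5 \<and> sum_list xs = d \<and> standard_exps xs} =
             set (filter (\<lambda>xs. 0 \<in> set (take 4 xs)) (bounded_compositions 3 5 d))"
    by (auto simp: set_bounded_compositions standard_exps_def)
  also have "card \<dots> = length (filter (\<lambda>xs. 0 \<in> set (take 4 xs)) (bounded_compositions 3 5 d))"
    by (intro distinct_card distinct_filter distinct_bounded_compositions)
  finally show ?thesis .
qed

lemma HF_gens5p9_6: "HF 5 (gen_ideal 5 (gens5p9 :: nat \<Rightarrow> 'k::field mpoly) 6) 6 = 120"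
  unfolding HF_gens5p9 by code_simp

lemma HF_gens5p9_7: "HF 5 (gen_ideal 5 (gens5p9 :: nat \<Rightarrow> 'k::field mpoly) 6) 7 = 124"
  unfolding HF_gens5p9 by code_simp

definition kernel_coeff :: "nat list \<Rightarrow> int" where
  "kernel_coeff xs =
     (let shape = rev (sort (filter (\<lambda>x. x \<noteq> 0) xs)) in
      if shape = [3, 3] then 6
      else if shape = [3, 2, 1] then -3
      else if shape = [3, 1, 1, 1] then 8
      else if shape = [2, 2, 2] then 6
      else if shape = [2, 2, 1, 1] then -2
      else 0)"

definition kernel_form :: "'k::comm_ring_1 mpoly" where
  "kernel_form = (\<Sum>m\<in>monomials 5 6. Poly_Mapping.single m (of_int (kernel_coeff (exps 5 m))))"

lemma lookup_kernel_form:
  "Poly_Mapping.lookup kernel_form m =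
   (if m \<in> monomials 5 6 then of_int (kernel_coeff (exps 5 m)) else 0)"
  unfolding kernel_form_def by (simp add: lookup_sum_single finite_monomials)

lemma kernel_form_in_hom_polys: "kernel_form \<in> hom_polys 5 6"
  unfolding hom_polys_eq by (auto simp: in_keys_iff lookup_kernel_form split: if_splits)

lemma kernel_form_notin_ideal: "(kernel_form :: 'k::field_char_0 mpoly) \<notin> gen_ideal 5 gens5p9 6"
proof
  let ?m = "monom_of_list [3, 3, 0, 0, 0]"
  have exps: "exps 5 ?m = [3, 3, 0, 0, 0]"
    using exps_monom_of_list[of "[3, 3, 0, 0, 0]"] by (simp add: numeral_eq_Suc)
  have "Poly_Mapping.keys ?m \<subseteq> {..<5}"
    using keys_monom_of_list[of "[3, 3, 0, 0, 0]"] by (simp add: numeral_eq_Suc)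
  then have "?m \<in> monomials 5 6"
    by (simp add: monomials_def mdeg_eq_sum_list_exps exps)
  then have "?m \<in> Poly_Mapping.keys (kernel_form :: 'k mpoly)"
    by (simp add: in_keys_iff lookup_kernel_form exps kernel_coeff_def)
  moreover have "standard_exps (exps 5 ?m)"
    by (simp add: exps standard_exps_def)
  moreover assume "(kernel_form :: 'k mpoly) \<in> gen_ideal 5 gens5p9 6"
  ultimately show False by (auto simp: mem_gen_ideal_gens5p9_iff)
qed

definition sum_over_lowerings :: "(nat list \<Rightarrow> int) \<Rightarrow> nat list \<Rightarrow> int" where
  "sum_over_lowerings c xs =
     (\<Sum>j\<leftarrow>[0..<length xs]. if xs ! j = 0 then 0 else c (xs[j := xs ! j - 1]))"

lemma lookup_sum_Var_mult_kernel_form: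
  assumes m: "m \<in> monomials 5 (Suc 6)"
  shows "Poly_Mapping.lookup ((\<Sum>j<5. Var j) * (kernel_form :: 'k::comm_ring_1 mpoly)) m =
         of_int (sum_over_lowerings kernel_coeff (exps 5 m))"
proof -
  let ?xs = "exps 5 m"
  have summand: "(if Poly_Mapping.lookup m j = 0 then 0
                  else Poly_Mapping.lookup kernel_form (m - Poly_Mapping.single j 1)) =
        (of_int (if ?xs ! j = 0 then 0 else kernel_coeff (?xs[j := ?xs ! j - 1])) :: 'k)"
    if j: "j < 5" for j
  proof (cases "Poly_Mapping.lookup m j = 0")
    case False
    then have "m - Poly_Mapping.single j 1 \<in> monomials 5 6"
      by (rule minus_single_in_monomials[OF m])
    then show ?thesis
      unfolding lookup_kernel_form exps_minus_single[OF j] using False j by simp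
  qed (simp add: j)
  have "Poly_Mapping.lookup ((\<Sum>j<5. Var j) * (kernel_form :: 'k mpoly)) m =
        (\<Sum>j<5. of_int (if ?xs ! j = 0 then 0 else kernel_coeff (?xs[j := ?xs ! j - 1])))"
    unfolding lookup_sum_Var_mult by (rule sum.cong) (simp_all add: summand)
  also have "\<dots> = of_int (sum_over_lowerings kernel_coeff ?xs)"
    unfolding sum_over_lowerings_def length_exps
    by (simp only: interv_sum_list_conv_sum_set_nat set_upt atLeast0LessThan of_int_sum)
  finally show ?thesis .
qed

lemma sum_over_lowerings_kernel_coeff:
  "\<forall>xs\<in>set (filter (\<lambda>xs. 0 \<in> set (take 4 xs)) (bounded_compositions 3 5 7)).
     sum_over_lowerings kernel_coeff xs = 0"
  by code_simp

lemma sum_Var_mult_kernel_form_in_ideal: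
  "(\<Sum>j<5. Var j) * (kernel_form :: 'k::field mpoly) \<in> gen_ideal 5 gens5p9 6"
proof -
  let ?f = "(\<Sum>j<5. Var j) * (kernel_form :: 'k mpoly)"
  have "?f \<in> hom_polys 5 (1 + 6)"
    by (intro hom_polys_mult hom_polys_sum Var_in_hom_polys kernel_form_in_hom_polys) simp
  then have f: "?f \<in> polys 5" "Poly_Mapping.keys ?f \<subseteq> monomials 5 7"
    by (simp add: hom_polys_def, simp add: hom_polys_eq)
  have "\<not> standard_exps (exps 5 m)" if m: "m \<in> Poly_Mapping.keys ?f" for m
  proof
    assume std: "standard_exps (exps 5 m)"
    have mono: "m \<in> monomials 5 (Suc 6)" using f m by auto
    then have "sum_list (exps 5 m) = 7" by (auto simp: monomials_def mdeg_eq_sum_list_exps)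
    then have "exps 5 m \<in> set (filter (\<lambda>xs. 0 \<in> set (take 4 xs)) (bounded_compositions 3 5 7))"
      using std by (simp add: set_bounded_compositions standard_exps_def)
    then have "Poly_Mapping.lookup ?f m = 0"
      using sum_over_lowerings_kernel_coeff by (simp add: lookup_sum_Var_mult_kernel_form[OF mono])
    then show False using m by (simp add: in_keys_iff)
  qed
  with f show ?thesis by (simp add: mem_gen_ideal_gens5p9_iff)
qed

theorem lemma5p9:
  shows "fails_WLP_inj 5 (gen_ideal 5 (gens5p9 :: nat \<Rightarrow> 'k::field_char_0 mpoly) 6) 6"
  unfolding fails_WLP_inj_def mult_injective_def
proof
  show "HF 5 (gen_ideal 5 (gens5p9 :: nat \<Rightarrow> 'k mpoly) 6) 6 \<le>
        HF 5 (gen_ideal 5 (gens5p9 :: nat \<Rightarrow> 'k mpoly) 6) (Suc 6)"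
    by (simp add: HF_gens5p9_6 HF_gens5p9_7)
  show "\<not> (\<forall>f\<in>hom_polys 5 6. (\<Sum>j<5. Var j) * f \<in> gen_ideal 5 gens5p9 6 \<longrightarrow>
                              f \<in> gen_ideal 5 (gens5p9 :: nat \<Rightarrow> 'k mpoly) 6)"
    using kernel_form_in_hom_polys kernel_form_notin_ideal sum_Var_mult_kernel_form_in_ideal
    by blast
qed

end
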